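(* Let $F$ be a field of characteristic zero, let $G$ be a torsion-free locally cyclic group, and let $\mathfrak{S}$ be a Schur ring over $G$. Then $\mathfrak{S}$ is either the group ring $F[G]$ or the symmetric Schur ring $F[G]^{\pm}$.
   Context: A group is locally cyclic if every finitely generated subgroup is cyclic. For finite $C\subseteq G$, $\overline{C}=\sum_{g\in C}g\in F[G]$ and $C^*=\{g^{-1}\mid g\in C\}$. A Schur ring over $G$ is an $F$-subspace $\mathfrak{S}=\operatorname{Span}_F\{\overline{C}\mid C\in\mathcal{D}(\mathfrak{S})\}$ of $F[G]$ where $\mathcal{D}(\mathfrak{S})$ is a partition of $G$ into finite sets such that (i) $\{1\}\in\mathcal{D}(\mathfrak{S})$; (ii) $C\in\mathcal{D}(\mathfrak{S})\Rightarrow C^*\in\mathcal{D}(\mathfrak{S})$; (iii) for all $C,D\in\mathcal{D}(\mathfrak{S})$, $\overline{C}\,\overline{D}=\sum_{E}\lambda_{CDE}\overline{E}$ with finitely many nonzero $\lambda_{CDE}\in F$. The group ring $F[G]$ is the Schur ring with partition into singletons; the symmetric Schur ring $F[G]^{\pm}$ is the Schur ring with partition $\{\{g,g^{-1}\}\mid g\in G\}$. *)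

theory Defs
  imports "HOL-Algebra.Elementary_Groups"
begin

definition torsion_free :: "('g, 'b) monoid_scheme \<Rightarrow> bool" where
  "torsion_free G \<longleftrightarrow>
     (\<forall>x \<in> carrier G. \<forall>n::nat. n > 0 \<longrightarrow> x [^]\<^bsub>G\<^esub> n = \<one>\<^bsub>G\<^esub> \<longrightarrow> x = \<one>\<^bsub>G\<^esub>)"

definition locally_cyclic :: "('g, 'b) monoid_scheme \<Rightarrow> bool" where
  "locally_cyclic G \<longleftrightarrow>
     (\<forall>S. S \<subseteq> carrier G \<longrightarrow> finite S \<longrightarrow> cyclic_group (subgroup_generated G S))"

(* Elements of the group ring F[G]: finitely supported functions G -> F
   (an element sum_g a_g g is represented by g |-> a_g, zero outside the carrier). *)

definition bar :: "'g set \<Rightarrow> 'g \<Rightarrow> 'f::field" where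
  "bar C = (\<lambda>x. if x \<in> C then 1 else 0)"

definition gr_mult :: "('g, 'b) monoid_scheme \<Rightarrow> ('g \<Rightarrow> 'f::field) \<Rightarrow> ('g \<Rightarrow> 'f) \<Rightarrow> 'g \<Rightarrow> 'f" where
  "gr_mult G a b = (\<lambda>x. if x \<in> carrier G then
       (\<Sum>g \<in> {g \<in> carrier G. a g \<noteq> 0}. a g * b (inv\<^bsub>G\<^esub> g \<otimes>\<^bsub>G\<^esub> x)) else 0)"

definition span_classes :: "'g set set \<Rightarrow> ('g \<Rightarrow> 'f::field) set" where
  "span_classes D = {(\<lambda>x. \<Sum>C \<in> T. c C * bar C x) | T c. finite T \<and> T \<subseteq> D}"

definition schur_partition :: "('g, 'b) monoid_scheme \<Rightarrow> 'g set set \<Rightarrow> ('f::field) itself \<Rightarrow> bool" where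
  "schur_partition G D (TYPE('f)) \<longleftrightarrow>
     (\<forall>C \<in> D. C \<noteq> {} \<and> finite C \<and> C \<subseteq> carrier G) \<and>
     (\<forall>C \<in> D. \<forall>C' \<in> D. C \<noteq> C' \<longrightarrow> C \<inter> C' = {}) \<and>
     \<Union>D = carrier G \<and>
     {\<one>\<^bsub>G\<^esub>} \<in> D \<and>
     (\<forall>C \<in> D. (\<lambda>g. inv\<^bsub>G\<^esub> g) ` C \<in> D) \<and>
     (\<forall>C \<in> D. \<forall>C' \<in> D. \<exists>lam::'g set \<Rightarrow> 'f.
        finite {E \<in> D. lam E \<noteq> 0} \<and>
        gr_mult G (bar C) (bar C') = (\<lambda>x. \<Sum>E \<in> {E \<in> D. lam E \<noteq> 0}. lam E * bar E x))"

definition schur_ring :: "('g, 'b) monoid_scheme \<Rightarrow> ('g \<Rightarrow> 'f::field) set \<Rightarrow> bool" where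
  "schur_ring G S \<longleftrightarrow> (\<exists>D. schur_partition G D TYPE('f) \<and> S = span_classes D)"

definition group_ring :: "('g, 'b) monoid_scheme \<Rightarrow> ('g \<Rightarrow> 'f::field) set" where
  "group_ring G = span_classes {{g} | g. g \<in> carrier G}"

definition sym_schur_ring :: "('g, 'b) monoid_scheme \<Rightarrow> ('g \<Rightarrow> 'f::field) set" where
  "sym_schur_ring G = span_classes {{g, inv\<^bsub>G\<^esub> g} | g. g \<in> carrier G}"

end

(*
  Every class C of the Schur ring is finite, so by local cyclicity it lies in an infinite cyclic
  subgroup: C = {c^k | k in K} for a finite set K of integers. The coefficient of c^s in the n-th
  power of the class sum of C counts the ways of writing s as an ordered sum of n elements of K,
  and these coefficients are constant on classes; in characteristic zero the support of the
  product of two class sums is moreover a union of classes. If m < M are the extreme elements of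
  K, the exponent jM has a unique representation, so for j >= M - m the class of c^(jM) only
  contains powers c^(jk) with k in {m, M}; comparing the classes of c^(NM) and c^((N+1)M) for some
  N > M - m gives K = {m, M}. Then c^(m+M) forms a class by itself. Singleton classes are closed
  under products and inverses, and a two-element class {c^a, c^b} excludes every singleton class
  {c^(na)} with n > 0, so m + M = 0 and C = {g, g^-1}. For the same reason a nontrivial singleton
  class excludes every class {h, h^-1} with h different from h^-1, so either all classes are
  singletons or all are of the form {g, g^-1}.
*)
theory Submission
  imports Defs "HOL-Algebra.Multiplicative_Group"
begin

section \<open>Representations of an integer as a sum of elements of a set\<close>

\<comment> \<open>The coefficient of \<open>x ^ s\<close> in \<open>(\<Sum>k\<in>K. x ^ k) ^ n\<close>.\<close>
definition sum_reps :: "nat \<Rightarrow> int set \<Rightarrow> int \<Rightarrow> nat" where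
  "sum_reps n K s = card {xs. length xs = n \<and> set xs \<subseteq> K \<and> sum_list xs = s}"

lemma finite_lists_with_sum:
  "finite K \<Longrightarrow> finite {xs. length xs = n \<and> set xs \<subseteq> K \<and> sum_list xs = s}"
  by (rule finite_subset[OF _ finite_lists_length_eq[of K n]]) auto

lemma sum_reps_0: "sum_reps 0 K s = (if s = 0 then 1 else 0)"
proof -
  have "{xs. length xs = 0 \<and> set xs \<subseteq> K \<and> sum_list xs = s} = (if s = 0 then {[]} else {})"
    by auto
  then show ?thesis
    by (simp add: sum_reps_def)
qed

lemma sum_reps_Suc:
  assumes "finite K"
  shows "sum_reps (Suc n) K s = (\<Sum>k\<in>K. sum_reps n K (s - k))"
proof -
  let ?L = "\<lambda>k. {xs. length xs = n \<and> set xs \<subseteq> K \<and> sum_list xs = s - k}"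
  have "{xs. length xs = Suc n \<and> set xs \<subseteq> K \<and> sum_list xs = s} = (\<Union>k\<in>K. (Cons k) ` ?L k)"
    by (auto simp: length_Suc_conv)
  moreover have "card (\<Union>k\<in>K. (Cons k) ` ?L k) = (\<Sum>k\<in>K. card (?L k))"
    by (subst card_UN_disjoint) (auto simp: assms finite_lists_with_sum card_image)
  ultimately show ?thesis
    by (simp add: sum_reps_def)
qed

lemma sum_list_eq_extreme_imp_replicate:
  fixes xs :: "int list"
  assumes "(\<forall>x\<in>set xs. x \<le> k) \<or> (\<forall>x\<in>set xs. k \<le> x)"
    and "sum_list xs = int (length xs) * k"
  shows "xs = replicate (length xs) k"
  using assms
proof (induction xs)
  case (Cons x xs)
  have "sum_list xs \<le> int (length xs) * k" if "\<forall>x\<in>set xs. x \<le> k"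
    using sum_list_mono[of xs id "\<lambda>_. k"] that by (simp add: sum_list_triv)
  moreover have "int (length xs) * k \<le> sum_list xs" if "\<forall>x\<in>set xs. k \<le> x"
    using sum_list_mono[of xs "\<lambda>_. k" id] that by (simp add: sum_list_triv)
  ultimately have "x = k" "sum_list xs = int (length xs) * k"
    using Cons.prems by (auto simp: algebra_simps)
  then show ?case
    using Cons by auto
qed simp

lemma sum_reps_extreme:
  assumes "k \<in> K" "(\<forall>x\<in>K. x \<le> k) \<or> (\<forall>x\<in>K. k \<le> x)"
  shows "sum_reps n K (int n * k) = 1"
proof -
  have "{xs. length xs = n \<and> set xs \<subseteq> K \<and> sum_list xs = int n * k} = {replicate n k}"
    using assms sum_list_eq_extreme_imp_replicate[of _ k]
    by (auto simp: sum_list_replicate)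
  then show ?thesis
    by (simp add: sum_reps_def)
qed

lemma sum_reps_eq_1_imp_multiple:
  assumes "sum_reps n K s = 1" "0 < n"
  shows "\<exists>k\<in>K. s = int n * k"
proof -
  obtain xs where unique: "{xs. length xs = n \<and> set xs \<subseteq> K \<and> sum_list xs = s} = {xs}"
    using assms(1) unfolding sum_reps_def by (auto simp: card_Suc_eq)
  then have xs: "length xs = n" "set xs \<subseteq> K" "sum_list xs = s"
    by auto
  have "sum_list (rotate1 xs) = sum_list xs"
    by (cases xs) (simp_all add: add.commute)
  then have "rotate1 xs \<in> {xs. length xs = n \<and> set xs \<subseteq> K \<and> sum_list xs = s}"
    using xs by simp
  then have "rotate1 xs = xs"
    using unique by blast
  then obtain k where "set xs = {k}"
    using rotate1_fixpoint_card[of xs] assms(2) xs(1) by (auto simp: card_Suc_eq)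
  then have "xs = replicate n k"
    using xs(1) by (intro replicate_eqI) auto
  then show ?thesis
    using xs \<open>set xs = {k}\<close> by (auto simp: sum_list_replicate)
qed

lemma sum_reps_interior:
  assumes "finite K" "m \<in> K" "k \<in> K" "M \<in> K" "m < k" "k < M" "M - m \<le> int n"
  shows "1 < sum_reps n K (int n * k)"
proof -
  let ?L = "{xs. length xs = n \<and> set xs \<subseteq> K \<and> sum_list xs = int n * k}"
  \<comment> \<open>Trade \<open>M - m\<close> copies of \<open>k\<close> for \<open>M - k\<close> copies of \<open>m\<close> and \<open>k - m\<close> copies of \<open>M\<close>.\<close>
  let ?ys = "replicate (nat (M - k)) m @ replicate (nat (k - m)) M @ replicate (n - nat (M - m)) k"
  have "int (n - nat (M - m)) = int n - (M - m)"
    using assms by auto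
  then have "sum_list ?ys = int n * k"
    using assms by (simp add: sum_list_replicate algebra_simps)
  then have "?ys \<in> ?L"
    using assms by auto
  moreover have "replicate n k \<in> ?L"
    using assms by (simp add: sum_list_replicate)
  moreover have "?ys \<noteq> replicate n k"
  proof -
    have "m \<in> set ?ys" "m \<notin> set (replicate n k)"
      using assms by auto
    then show ?thesis
      by metis
  qed
  ultimately have "card {?ys, replicate n k} \<le> card ?L"
    by (intro card_mono finite_lists_with_sum assms(1)) auto
  then show ?thesis
    using \<open>?ys \<noteq> replicate n k\<close> by (simp add: sum_reps_def)
qed

lemma sum_reps_two_eq_2_iff:
  assumes "m \<noteq> M"
  shows "sum_reps 2 {m, M} s = 2 \<longleftrightarrow> s = m + M"
proof -
  have "sum_reps 2 {m, M} s = (\<Sum>k\<in>{m, M}. \<Sum>k'\<in>{m, M}. if s = k + k' then 1 else 0)"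
    by (simp add: numeral_2_eq_2 sum_reps_Suc sum_reps_0 diff_diff_eq add.commute)
  then show ?thesis
    using assms by auto
qed

section \<open>Class sums and their products\<close>

lemma gr_mult_bar:
  assumes "A \<subseteq> carrier G"
  shows "gr_mult G (bar A) (f :: 'g \<Rightarrow> 'f::field) x =
    (if x \<in> carrier G then \<Sum>g\<in>A. f (inv\<^bsub>G\<^esub> g \<otimes>\<^bsub>G\<^esub> x) else 0)"
proof -
  have "{g \<in> carrier G. (bar A g :: 'f) \<noteq> 0} = A"
    using assms by (auto simp: bar_def)
  moreover have "(\<Sum>g\<in>A. bar A g * f (inv\<^bsub>G\<^esub> g \<otimes>\<^bsub>G\<^esub> x)) = (\<Sum>g\<in>A. f (inv\<^bsub>G\<^esub> g \<otimes>\<^bsub>G\<^esub> x))"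
    by (rule sum.cong) (simp_all add: bar_def)
  ultimately show ?thesis
    by (simp add: gr_mult_def)
qed

lemma gr_mult_bar_bar:
  assumes "A \<subseteq> carrier G" "finite A" "x \<in> carrier G"
  shows "gr_mult G (bar A) (bar B) x =
    (of_nat (card {g\<in>A. inv\<^bsub>G\<^esub> g \<otimes>\<^bsub>G\<^esub> x \<in> B}) :: 'f::field)"
proof -
  have "gr_mult G (bar A) (bar B) x = (\<Sum>g\<in>A. if inv\<^bsub>G\<^esub> g \<otimes>\<^bsub>G\<^esub> x \<in> B then 1 else (0::'f))"
    unfolding gr_mult_bar[OF assms(1)] using assms by (simp add: bar_def)
  also have "\<dots> = of_nat (card {g\<in>A. inv\<^bsub>G\<^esub> g \<otimes>\<^bsub>G\<^esub> x \<in> B})"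
    using sum.inter_filter[OF assms(2), of "\<lambda>_. 1::'f", symmetric] by simp
  finally show ?thesis .
qed

lemma (in group) gr_mult_bar_support:
  assumes "A \<subseteq> carrier G"
  shows "{x. gr_mult G (bar A) f x \<noteq> 0} \<subseteq> (\<lambda>(g, h). g \<otimes> h) ` (A \<times> {h. f h \<noteq> 0})"
proof
  fix x
  assume "x \<in> {x. gr_mult G (bar A) f x \<noteq> 0}"
  then have x: "x \<in> carrier G" "(\<Sum>g\<in>A. f (inv g \<otimes> x)) \<noteq> 0"
    using assms by (simp_all add: gr_mult_bar split: if_splits)
  then obtain g where g: "g \<in> A" "f (inv g \<otimes> x) \<noteq> 0"
    using sum.not_neutral_contains_not_neutral by blast
  moreover have "g \<otimes> (inv g \<otimes> x) = x"
    using g x assms by (auto simp: m_assoc[symmetric])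
  ultimately show "x \<in> (\<lambda>(g, h). g \<otimes> h) ` (A \<times> {h. f h \<noteq> 0})"
    by (intro rev_image_eqI[of "(g, inv g \<otimes> x)"]) simp_all
qed

lemma schur_partitionD:
  assumes "schur_partition G D TYPE('f::field)"
  shows schur_partition_class: "\<And>C. C \<in> D \<Longrightarrow> C \<noteq> {} \<and> finite C \<and> C \<subseteq> carrier G"
    and schur_partition_disjoint: "\<And>C C' x. C \<in> D \<Longrightarrow> C' \<in> D \<Longrightarrow> x \<in> C \<Longrightarrow> x \<in> C' \<Longrightarrow> C = C'"
    and schur_partition_cover: "\<And>x. x \<in> carrier G \<Longrightarrow> \<exists>C\<in>D. x \<in> C"
    and schur_partition_one: "{\<one>\<^bsub>G\<^esub>} \<in> D"
    and schur_partition_inv: "\<And>C. C \<in> D \<Longrightarrow> (\<lambda>g. inv\<^bsub>G\<^esub> g) ` C \<in> D"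
    and schur_partition_mult: "\<And>C C'. C \<in> D \<Longrightarrow> C' \<in> D \<Longrightarrow> \<exists>lam::'g set \<Rightarrow> 'f.
      gr_mult G (bar C) (bar C') = (\<lambda>x. \<Sum>E \<in> {E \<in> D. lam E \<noteq> 0}. lam E * bar E x)"
proof -
  note defining_props = assms[unfolded schur_partition_def]
  show "\<And>C. C \<in> D \<Longrightarrow> C \<noteq> {} \<and> finite C \<and> C \<subseteq> carrier G"
    using defining_props by blast
  show "\<And>C C' x. C \<in> D \<Longrightarrow> C' \<in> D \<Longrightarrow> x \<in> C \<Longrightarrow> x \<in> C' \<Longrightarrow> C = C'"
    using defining_props by blast
  show "\<And>x. x \<in> carrier G \<Longrightarrow> \<exists>C\<in>D. x \<in> C"
    using defining_props by blast
  show "{\<one>\<^bsub>G\<^esub>} \<in> D"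
    using defining_props by blast
  show "\<And>C. C \<in> D \<Longrightarrow> (\<lambda>g. inv\<^bsub>G\<^esub> g) ` C \<in> D"
    using defining_props by blast
  show "\<And>C C'. C \<in> D \<Longrightarrow> C' \<in> D \<Longrightarrow> \<exists>lam::'g set \<Rightarrow> 'f.
      gr_mult G (bar C) (bar C') = (\<lambda>x. \<Sum>E \<in> {E \<in> D. lam E \<noteq> 0}. lam E * bar E x)"
    using defining_props by blast
qed

definition class_constant :: "'g set set \<Rightarrow> ('g \<Rightarrow> 'f) \<Rightarrow> bool" where
  "class_constant D f \<longleftrightarrow> (\<forall>E\<in>D. \<forall>x\<in>E. \<forall>y\<in>E. f x = f y)"

lemma class_constant_bar:
  assumes "schur_partition G D TYPE('f::field)" "E \<in> D"
  shows "class_constant D (bar E :: 'g \<Rightarrow> 'f)"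
  unfolding class_constant_def
proof (intro ballI)
  fix E' x y
  assume "E' \<in> D" "x \<in> E'" "y \<in> E'"
  then have "x \<in> E \<longleftrightarrow> y \<in> E"
    using schur_partition_disjoint[OF assms(1) assms(2)] by blast
  then show "(bar E x :: 'f) = bar E y"
    by (simp add: bar_def)
qed

lemma class_constant_sum:
  assumes "\<And>E. E \<in> T \<Longrightarrow> class_constant D (f E)"
  shows "class_constant D (\<lambda>x. \<Sum>E\<in>T. f E x)"
  unfolding class_constant_def
proof (intro ballI)
  fix E' x y
  assume "E' \<in> D" "x \<in> E'" "y \<in> E'"
  then show "(\<Sum>E\<in>T. f E x) = (\<Sum>E\<in>T. f E y)"
    using assms unfolding class_constant_def by (intro sum.cong) blast+
qed

lemma class_constant_scale:
  assumes "class_constant D f"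
  shows "class_constant D (\<lambda>x. a * f x)"
  using assms unfolding class_constant_def by (metis (no_types))

lemma class_constant_gr_mult_bar_bar:
  assumes D: "schur_partition G D TYPE('f::field)" and "A \<in> D" "B \<in> D"
  shows "class_constant D (gr_mult G (bar A) (bar B) :: 'g \<Rightarrow> 'f)"
proof -
  obtain lam :: "'g set \<Rightarrow> 'f"
    where lam: "gr_mult G (bar A) (bar B) = (\<lambda>x. \<Sum>E \<in> {E \<in> D. lam E \<noteq> 0}. lam E * bar E x)"
    using schur_partition_mult[OF D assms(2,3)] by blast
  show ?thesis
    unfolding lam by (intro class_constant_sum class_constant_scale class_constant_bar[OF D]) simp
qed

lemma class_product_support:
  assumes D: "schur_partition G D TYPE('f::field_char_0)"
    and A: "A \<in> D" and B: "B \<in> D" and E: "E \<in> D" "x \<in> E" "y \<in> E"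
    and a: "a \<in> A" "inv\<^bsub>G\<^esub> a \<otimes>\<^bsub>G\<^esub> x \<in> B"
  shows "\<exists>a'\<in>A. inv\<^bsub>G\<^esub> a' \<otimes>\<^bsub>G\<^esub> y \<in> B"
proof -
  have A_fin: "A \<subseteq> carrier G" "finite A" and xy: "x \<in> carrier G" "y \<in> carrier G"
    using schur_partition_class[OF D A] schur_partition_class[OF D E(1)] E by auto
  have "card {g\<in>A. inv\<^bsub>G\<^esub> g \<otimes>\<^bsub>G\<^esub> x \<in> B} \<noteq> 0"
    using a A_fin by auto
  moreover have "(gr_mult G (bar A) (bar B) x :: 'f) = gr_mult G (bar A) (bar B) y"
    using class_constant_gr_mult_bar_bar[OF D A B] E unfolding class_constant_def by blast
  \<comment> \<open>The coefficients are cardinalities, so characteristic zero keeps them nonzero.\<close>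
  ultimately have "card {g\<in>A. inv\<^bsub>G\<^esub> g \<otimes>\<^bsub>G\<^esub> y \<in> B} \<noteq> 0"
    using gr_mult_bar_bar[OF A_fin xy(1), of B, where 'f = 'f]
      gr_mult_bar_bar[OF A_fin xy(2), of B, where 'f = 'f] by simp
  then show ?thesis
    by (metis (no_types, lifting) card.empty empty_Collect_eq)
qed

lemma class_constant_expansion:
  fixes f :: "'g \<Rightarrow> 'f::field"
  assumes D: "schur_partition G D TYPE('f)" and cc: "class_constant D f"
    and outside: "\<And>x. x \<notin> carrier G \<Longrightarrow> f x = 0" and fin: "finite {x. f x \<noteq> 0}"
  obtains T a where "finite T" "T \<subseteq> D" "\<And>x. f x = (\<Sum>E\<in>T. a E * bar E x)"
proof
  define T where "T = {E\<in>D. \<exists>x\<in>E. f x \<noteq> 0}"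
  define a where "a E = f (SOME x. x \<in> E)" for E
  show "T \<subseteq> D"
    by (auto simp: T_def)
  have "inj_on (\<lambda>E. E \<inter> {x. f x \<noteq> 0}) T"
    using schur_partition_disjoint[OF D] by (auto simp: T_def inj_on_def)
  then show "finite T"
    by (rule inj_on_finite[where B = "Pow {x. f x \<noteq> 0}"]) (use fin in auto)
  show "f x = (\<Sum>E\<in>T. a E * bar E x)" for x
  proof (cases "x \<in> carrier G")
    case False
    then have "bar E x = (0::'f)" if "E \<in> T" for E
      using that schur_partition_class[OF D] by (auto simp: T_def bar_def)
    then show ?thesis
      using False outside by simp
  next
    case True
    then obtain E0 where E0: "E0 \<in> D" "x \<in> E0"
      using schur_partition_cover[OF D] by blast
    have "bar E x = (if E = E0 then 1 else (0::'f))" if "E \<in> T" for E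
      using that E0 schur_partition_disjoint[OF D] by (auto simp: T_def bar_def)
    then have "(\<Sum>E\<in>T. a E * bar E x) = (\<Sum>E\<in>T. if E = E0 then a E0 else 0)"
      by (intro sum.cong) auto
    also have "\<dots> = (if E0 \<in> T then a E0 else 0)"
      using \<open>finite T\<close> by (simp add: sum.delta')
    also have "\<dots> = f x"
    proof -
      have "(SOME x. x \<in> E0) \<in> E0"
        using E0(2) by (rule someI)
      then have "a E0 = f x"
        using cc E0 unfolding a_def class_constant_def by blast
      then show ?thesis
        using E0 by (auto simp: T_def)
    qed
    finally show ?thesis ..
  qed
qed

lemma class_constant_gr_mult_bar:
  fixes f :: "'g \<Rightarrow> 'f::field"
  assumes D: "schur_partition G D TYPE('f)" and C: "C \<in> D" and cc: "class_constant D f"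
    and outside: "\<And>x. x \<notin> carrier G \<Longrightarrow> f x = 0" and fin: "finite {x. f x \<noteq> 0}"
  shows "class_constant D (gr_mult G (bar C) f)"
proof -
  obtain T a where T: "finite T" "T \<subseteq> D" and f: "\<And>x. f x = (\<Sum>E\<in>T. a E * bar E x)"
    using class_constant_expansion[OF D cc outside fin] by blast
  have C_sub: "C \<subseteq> carrier G"
    using schur_partition_class[OF D C] by blast
  have "gr_mult G (bar C) f x = (\<Sum>E\<in>T. a E * gr_mult G (bar C) (bar E) x)" for x
    unfolding gr_mult_bar[OF C_sub] f
    by (simp add: sum.swap[of _ C] sum_distrib_left)
  then have "gr_mult G (bar C) f = (\<lambda>x. \<Sum>E\<in>T. a E * gr_mult G (bar C) (bar E) x)"
    by blast
  then show ?thesis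
    using T by (auto intro!: class_constant_sum class_constant_scale class_constant_gr_mult_bar_bar D C)
qed

fun bar_power :: "('g, 'b) monoid_scheme \<Rightarrow> 'g set \<Rightarrow> nat \<Rightarrow> 'g \<Rightarrow> 'f::field" where
  "bar_power G C 0 = bar {\<one>\<^bsub>G\<^esub>}"
| "bar_power G C (Suc n) = gr_mult G (bar C) (bar_power G C n)"

context group
begin

lemma bar_power_outside_carrier:
  "x \<notin> carrier G \<Longrightarrow> bar_power G C n x = 0"
  by (cases n) (auto simp: bar_def gr_mult_def)

lemma bar_power_support_subgroup:
  assumes "subgroup H G" "C \<subseteq> H"
  shows "{x. bar_power G C n x \<noteq> 0} \<subseteq> H"
proof (induction n)
  case 0
  then show ?case
    using subgroup.one_closed[OF assms(1)] by (auto simp: bar_def)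
next
  case (Suc n)
  have "C \<subseteq> carrier G"
    using assms subgroup.subset by blast
  then show ?case
    using gr_mult_bar_support[of C "bar_power G C n"] Suc subgroup.m_closed[OF assms(1)] assms(2)
    by fastforce
qed

lemma finite_bar_power_support:
  assumes "C \<subseteq> carrier G" "finite C"
  shows "finite {x. bar_power G C n x \<noteq> 0}"
proof (induction n)
  case 0
  then show ?case
    by (simp add: bar_def)
next
  case (Suc n)
  then show ?case
    using gr_mult_bar_support[OF assms(1), of "bar_power G C n"] assms(2)
    by (auto intro: finite_subset)
qed

lemma class_constant_bar_power:
  assumes D: "schur_partition G D TYPE('f::field)" and C: "C \<in> D"
  shows "class_constant D (bar_power G C n :: 'a \<Rightarrow> 'f)"
proof (induction n)
  case 0
  then show ?case
    using class_constant_bar[OF D schur_partition_one[OF D]] by simp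
next
  case (Suc n)
  have "C \<subseteq> carrier G" "finite C"
    using schur_partition_class[OF D C] by auto
  then show ?case
    by (simp add: class_constant_gr_mult_bar[OF D C Suc] bar_power_outside_carrier
        finite_bar_power_support)
qed

section \<open>Classes inside an infinite cyclic subgroup\<close>

lemma torsion_free_int_pow_eq_iff:
  assumes "torsion_free G" "c \<in> carrier G" "c \<noteq> \<one>"
  shows "c [^] (i::int) = c [^] j \<longleftrightarrow> i = j"
proof -
  have "ord c = 0"
    using assms by (auto simp: ord_eq_0 torsion_free_def)
  then show ?thesis
    using int_pow_eq[OF assms(2), of i j] by auto
qed

lemma inv_int_pow_mult:
  "c \<in> carrier G \<Longrightarrow> inv (c [^] (i::int)) \<otimes> c [^] (j::int) = c [^] (j - i)"
  by (simp add: int_pow_neg[symmetric] int_pow_mult[symmetric])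

lemma int_pow_range_subgroup:
  "c \<in> carrier G \<Longrightarrow> subgroup (range (\<lambda>k::int. c [^] k)) G"
  using generate_is_subgroup[of "{c}"] generate_pow[of c] by (simp add: full_SetCompr_eq)

lemma locally_cyclic_subset_int_pow_range:
  assumes "locally_cyclic G" "finite S" "S \<subseteq> carrier G"
  shows "\<exists>c\<in>carrier G. S \<subseteq> range (\<lambda>k::int. c [^] k)"
proof -
  let ?H = "subgroup_generated G S"
  have "cyclic_group ?H"
    using assms unfolding locally_cyclic_def by blast
  then obtain c where c: "c \<in> carrier ?H" "carrier ?H = range (\<lambda>k::int. c [^]\<^bsub>?H\<^esub> k)"
    using group.cyclic_group[OF group_subgroup_generated] by blast
  have "S \<subseteq> carrier ?H"
    using assms(3) by (auto simp: carrier_subgroup_generated intro: generate.incl)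
  moreover have "c \<in> carrier G"
    using c(1) carrier_subgroup_generated_subset by blast
  ultimately show ?thesis
    using c(2) int_pow_subgroup_generated[OF c(1)] by auto
qed

lemma bar_power_int_pow:
  assumes tf: "torsion_free G" and c: "c \<in> carrier G" "c \<noteq> \<one>" and K: "finite K"
  shows "bar_power G ((\<lambda>k::int. c [^] k) ` K) n (c [^] (s::int)) = (of_nat (sum_reps n K s) :: 'f::field)"
proof (induction n arbitrary: s)
  case 0
  then show ?case
    using torsion_free_int_pow_eq_iff[OF tf c, of s 0] by (simp add: bar_def sum_reps_0)
next
  case (Suc n)
  have inj: "inj_on (\<lambda>k::int. c [^] k) K"
    using torsion_free_int_pow_eq_iff[OF tf c] by (auto intro: inj_onI)
  have "(\<lambda>k. c [^] k) ` K \<subseteq> carrier G"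
    using c(1) by auto
  then have "(bar_power G ((\<lambda>k. c [^] k) ` K) (Suc n) (c [^] s) :: 'f)
      = (\<Sum>k\<in>K. bar_power G ((\<lambda>k. c [^] k) ` K) n (inv (c [^] k) \<otimes> c [^] s))"
    using c(1) by (simp add: gr_mult_bar sum.reindex[OF inj])
  also have "\<dots> = (\<Sum>k\<in>K. of_nat (sum_reps n K (s - k)))"
    by (intro sum.cong refl) (simp only: inv_int_pow_mult[OF c(1)] Suc.IH)
  also have "\<dots> = of_nat (sum_reps (Suc n) K s)"
    by (simp add: sum_reps_Suc[OF K])
  finally show ?case .
qed

lemma finite_int_pow_image_imp_finite:
  assumes "torsion_free G" "c \<in> carrier G" "c \<noteq> \<one>" "finite ((\<lambda>k::int. c [^] k) ` K)"
  shows "finite K"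
  using assms(4) torsion_free_int_pow_eq_iff[OF assms(1-3)] by (auto dest: finite_imageD intro: inj_onI)

lemma class_of_int_pow:
  assumes tf: "torsion_free G" and D: "schur_partition G D TYPE('f::field_char_0)"
    and C: "C \<in> D" "C = (\<lambda>k::int. c [^] k) ` K" and c: "c \<in> carrier G" "c \<noteq> \<one>"
    and E: "E \<in> D" "c [^] s \<in> E" "y \<in> E" and reps: "sum_reps n K s \<noteq> 0"
  shows "\<exists>t. y = c [^] t \<and> sum_reps n K t = sum_reps n K s"
proof -
  have "finite K"
    using schur_partition_class[OF D C(1)] C(2) finite_int_pow_image_imp_finite[OF tf c] by auto
  note power_at = bar_power_int_pow[OF tf c this, where 'f = 'f]
  have "(bar_power G C n y :: 'f) = bar_power G C n (c [^] s)"
    using class_constant_bar_power[OF D C(1), of n] E unfolding class_constant_def by blast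
  then have y_val: "(bar_power G C n y :: 'f) = of_nat (sum_reps n K s)"
    using power_at C(2) by simp
  have "C \<subseteq> range (\<lambda>k::int. c [^] k)"
    using C(2) by blast
  then have "{x. (bar_power G C n x :: 'f) \<noteq> 0} \<subseteq> range (\<lambda>k::int. c [^] k)"
    by (rule bar_power_support_subgroup[OF int_pow_range_subgroup[OF c(1)]])
  moreover have "(bar_power G C n y :: 'f) \<noteq> 0"
    using y_val reps by simp
  ultimately have "y \<in> range (\<lambda>k::int. c [^] k)"
    by blast
  then obtain t :: int where "y = c [^] t"
    by blast
  then show ?thesis
    using y_val power_at C(2) by auto
qed

lemma class_of_extreme_int_pow:
  assumes tf: "torsion_free G" and D: "schur_partition G D TYPE('f::field_char_0)"
    and C: "C \<in> D" "C = (\<lambda>k::int. c [^] k) ` K" and c: "c \<in> carrier G" "c \<noteq> \<one>"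
    and k0: "k0 \<in> K" "(\<forall>k\<in>K. k \<le> k0) \<or> (\<forall>k\<in>K. k0 \<le> k)" and j: "0 < j"
    and E: "E \<in> D" "c [^] (int j * k0) \<in> E" "y \<in> E"
  shows "\<exists>k\<in>K. y = c [^] (int j * k) \<and> sum_reps j K (int j * k) = 1"
proof -
  have "sum_reps j K (int j * k0) = 1"
    using sum_reps_extreme[OF k0] .
  then obtain t where "y = c [^] t" "sum_reps j K t = 1"
    using class_of_int_pow[OF tf D C c E, of j] by auto
  then show ?thesis
    using sum_reps_eq_1_imp_multiple[OF _ j] by blast
qed

lemma class_of_large_max_int_pow:
  assumes tf: "torsion_free G" and D: "schur_partition G D TYPE('f::field_char_0)"
    and C: "C \<in> D" "C = (\<lambda>k::int. c [^] k) ` K" and c: "c \<in> carrier G" "c \<noteq> \<one>"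
    and j: "Max K - Min K \<le> int j" "0 < j"
    and E: "E \<in> D" "c [^] (int j * Max K) \<in> E" "y \<in> E"
  shows "\<exists>k\<in>{Min K, Max K}. y = c [^] (int j * k)"
proof -
  have K: "finite K" "K \<noteq> {}"
    using schur_partition_class[OF D C(1)] C(2) finite_int_pow_image_imp_finite[OF tf c] by auto
  obtain k where k: "k \<in> K" "y = c [^] (int j * k)" "sum_reps j K (int j * k) = 1"
    using class_of_extreme_int_pow[OF tf D C c Max_in[OF K] _ j(2) E] K(1) by force
  \<comment> \<open>An exponent strictly between \<open>Min K\<close> and \<open>Max K\<close> would have several representations.\<close>
  have "\<not> (Min K < k \<and> k < Max K)"
  proof
    assume "Min K < k \<and> k < Max K"
    then have "1 < sum_reps j K (int j * k)"
      using sum_reps_interior[OF K(1) Min_in[OF K] k(1) Max_in[OF K]] j(1) by blast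
    then show False
      using k(3) by simp
  qed
  then have "k = Min K \<or> k = Max K"
    using Min_le[OF K(1) k(1)] Max_ge[OF K(1) k(1)] by linarith
  then show ?thesis
    using k(2) by blast
qed

section \<open>The shape of the classes\<close>

lemma singleton_class_mult:
  assumes D: "schur_partition G D TYPE('f::field_char_0)" and "{g} \<in> D" "{h} \<in> D"
  shows "{g \<otimes> h} \<in> D"
proof -
  have gh: "g \<in> carrier G" "h \<in> carrier G"
    using schur_partition_class[OF D assms(2)] schur_partition_class[OF D assms(3)] by auto
  then obtain E where E: "E \<in> D" "g \<otimes> h \<in> E"
    using schur_partition_cover[OF D] by (meson m_closed)
  have "y = g \<otimes> h" if "y \<in> E" for y
  proof -
    have "inv g \<otimes> (g \<otimes> h) \<in> {h}"
      using gh by (simp add: m_assoc[symmetric])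
    then have "inv g \<otimes> y = h"
      using class_product_support[OF D assms(2,3) E(1) E(2) that, of g] by simp
    moreover have "y \<in> carrier G"
      using schur_partition_class[OF D E(1)] that by auto
    ultimately show ?thesis
      using gh inv_solve_left by blast
  qed
  then have "E = {g \<otimes> h}"
    using E(2) by blast
  then show ?thesis
    using E(1) by simp
qed

lemma singleton_class_int_pow:
  assumes D: "schur_partition G D TYPE('f::field_char_0)" and g: "{g} \<in> D"
  shows "{g [^] (k::int)} \<in> D"
proof -
  have g_carrier: "g \<in> carrier G"
    using schur_partition_class[OF D g] by auto
  have g_inv: "{inv g} \<in> D"
    using schur_partition_inv[OF D g] by simp
  show ?thesis
  proof (induction k rule: int_induct[where k = 0])
    case base
    then show ?case
      using schur_partition_one[OF D] by simp
  next
    case (step1 i)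
    then show ?case
      using singleton_class_mult[OF D step1(2) g] g_carrier by (simp add: int_pow_mult)
  next
    case (step2 i)
    then show ?case
      using singleton_class_mult[OF D step2(2) g_inv] g_carrier
      by (simp add: int_pow_diff int_pow_mult)
  qed
qed

lemma pair_class_excludes_singleton_multiple:
  assumes tf: "torsion_free G" and D: "schur_partition G D TYPE('f::field_char_0)"
    and c: "c \<in> carrier G" "c \<noteq> \<one>"
    and pair: "{c [^] (\<alpha>::int), c [^] (\<beta>::int)} \<in> D" "\<alpha> \<noteq> \<beta>" and n: "0 < n"
  shows "{c [^] (int n * \<alpha>)} \<notin> D"
proof
  assume single: "{c [^] (int n * \<alpha>)} \<in> D"
  have pair_image: "{c [^] \<alpha>, c [^] \<beta>} = (\<lambda>k. c [^] k) ` {\<alpha>, \<beta>}"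
    by simp
  obtain E where E: "E \<in> D" "c [^] (int (Suc n) * \<alpha>) \<in> E"
    using schur_partition_cover[OF D] c by blast
  have inv_single: "{c [^] (- (int n * \<alpha>))} \<in> D"
    using schur_partition_inv[OF D single] c by (simp add: int_pow_neg)
  \<comment> \<open>\<open>c [^] \<alpha>\<close> lies in the support of the product of the class of \<open>c [^] ((n + 1) \<alpha>)\<close>
    with \<open>{c [^] (- n \<alpha>)}\<close>, hence so does \<open>c [^] \<beta>\<close>.\<close>
  have "inv (c [^] (int (Suc n) * \<alpha>)) \<otimes> c [^] \<alpha> \<in> {c [^] (- (int n * \<alpha>))}"
    using c by (simp add: inv_int_pow_mult algebra_simps)
  then obtain a where a: "a \<in> E" "inv a \<otimes> c [^] \<beta> = c [^] (- (int n * \<alpha>))"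
    using class_product_support[OF D E(1) inv_single pair(1), of "c [^] \<alpha>" "c [^] \<beta>"] E(2) by auto
  obtain k where k: "k \<in> {\<alpha>, \<beta>}" "a = c [^] (int (Suc n) * k)"
    using class_of_extreme_int_pow[OF tf D pair(1) pair_image c _ _ _ E(1) E(2) a(1)] by force
  have "\<beta> - int (Suc n) * k = - (int n * \<alpha>)"
    using a(2) k(2) c by (simp add: inv_int_pow_mult torsion_free_int_pow_eq_iff[OF tf c])
  then show False
    using k(1) pair(2) n by (auto simp: algebra_simps)
qed

lemma pair_class_excludes_singleton:
  assumes tf: "torsion_free G" and D: "schur_partition G D TYPE('f::field_char_0)"
    and c: "c \<in> carrier G" "c \<noteq> \<one>"
    and pair: "{c [^] (\<alpha>::int), c [^] (\<beta>::int)} \<in> D" "\<alpha> \<noteq> \<beta>"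
    and single: "{c [^] (\<gamma>::int)} \<in> D" "\<gamma> \<noteq> 0"
  shows False
proof -
  have "\<gamma> * (sgn \<gamma> * \<alpha>) = int (nat \<bar>\<gamma>\<bar>) * \<alpha>"
    by (cases "0 < \<gamma>") (auto simp: sgn_if)
  then have "(c [^] \<gamma>) [^] (sgn \<gamma> * \<alpha>) = c [^] (int (nat \<bar>\<gamma>\<bar>) * \<alpha>)"
    using c(1) by (simp only: int_pow_pow)
  then have "{c [^] (int (nat \<bar>\<gamma>\<bar>) * \<alpha>)} \<in> D"
    using singleton_class_int_pow[OF D single(1)] by metis
  then show False
    using pair_class_excludes_singleton_multiple[OF tf D c pair, of "nat \<bar>\<gamma>\<bar>"] single(2) by simp
qed

lemma class_exponents_min_max:
  assumes tf: "torsion_free G" and D: "schur_partition G D TYPE('f::field_char_0)"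
    and C: "C \<in> D" "C = (\<lambda>k::int. c [^] k) ` K" and c: "c \<in> carrier G" "c \<noteq> \<one>"
  shows "K \<subseteq> {Min K, Max K}"
proof
  have K: "finite K" "K \<noteq> {}"
    using schur_partition_class[OF D C(1)] C(2) finite_int_pow_image_imp_finite[OF tf c] by auto
  define m where "m = Min K"
  define M where "M = Max K"
  have mM: "M \<in> K" "\<And>k. k \<in> K \<Longrightarrow> m \<le> k \<and> k \<le> M"
    using K by (auto simp: m_def M_def)
  define N where "N = Suc (nat (M - m))"
  have N: "M - m \<le> int N" "0 < N"
    by (auto simp: N_def)
  have extreme_class: "\<exists>k\<in>{m, M}. y = c [^] (int j * k)"
    if "N \<le> j" "E \<in> D" "c [^] (int j * M) \<in> E" "y \<in> E" for j E y
    using class_of_large_max_int_pow[OF tf D C c, of j E y] that N unfolding m_def M_def by simp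
  obtain E1 where E1: "E1 \<in> D" "c [^] (int N * M) \<in> E1"
    using schur_partition_cover[OF D] c by blast
  obtain E2 where E2: "E2 \<in> D" "c [^] (int (Suc N) * M) \<in> E2"
    using schur_partition_cover[OF D] c by blast
  \<comment> \<open>\<open>c [^] M\<close> lies in the support of the product of \<open>E2\<close> with the inverse of \<open>E1\<close>, hence so does
    every element of \<open>C\<close>; as \<open>N\<close> exceeds \<open>M - m\<close>, this pins its exponent down to \<open>m\<close> or \<open>M\<close>.\<close>
  have inv_E1: "(\<lambda>g. inv g) ` E1 \<in> D"
    using schur_partition_inv[OF D E1(1)] .
  have "inv (c [^] (int (Suc N) * M)) \<otimes> c [^] M = c [^] (- (int N * M))"
    using c by (simp add: inv_int_pow_mult algebra_simps)
  then have witness: "inv (c [^] (int (Suc N) * M)) \<otimes> c [^] M \<in> (\<lambda>g. inv g) ` E1"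
    using E1(2) c(1) by (auto simp: int_pow_neg)
  fix k
  assume k: "k \<in> K"
  have "c [^] M \<in> C" "c [^] k \<in> C"
    using C(2) mM(1) k by auto
  then obtain a where a: "a \<in> E2" "inv a \<otimes> c [^] k \<in> (\<lambda>g. inv g) ` E1"
    using class_product_support[OF D E2(1) inv_E1 C(1)] E2(2) witness by blast
  then obtain e where e: "e \<in> E1" "inv a \<otimes> c [^] k = inv e"
    by blast
  obtain k1 where k1: "k1 \<in> {m, M}" "a = c [^] (int (Suc N) * k1)"
    using extreme_class[OF _ E2 a(1)] by auto
  obtain k2 where k2: "k2 \<in> {m, M}" "e = c [^] (int N * k2)"
    using extreme_class[OF _ E1 e(1)] by auto
  have "c [^] (k - int (Suc N) * k1) = c [^] (- (int N * k2))"
    using e(2) k1(2) k2(2) c(1) by (simp add: inv_int_pow_mult int_pow_neg)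
  then have "k = k1 + int N * (k1 - k2)"
    by (simp add: torsion_free_int_pow_eq_iff[OF tf c] algebra_simps)
  moreover have "0 < int N * (M - m)" if "m < M"
    using that N(2) by simp
  ultimately show "k \<in> {Min K, Max K}"
    using k1(1) k2(1) mM(2)[OF k] unfolding m_def[symmetric] M_def[symmetric]
    by (auto simp: algebra_simps)
qed

lemma pair_class_sum_singleton:
  assumes tf: "torsion_free G" and D: "schur_partition G D TYPE('f::field_char_0)"
    and c: "c \<in> carrier G" "c \<noteq> \<one>"
    and pair: "{c [^] (m::int), c [^] (M::int)} \<in> D" "m \<noteq> M"
  shows "{c [^] (m + M)} \<in> D"
proof -
  obtain E where E: "E \<in> D" "c [^] (m + M) \<in> E"
    using schur_partition_cover[OF D] c by blast
  have pair_image: "{c [^] m, c [^] M} = (\<lambda>k. c [^] k) ` {m, M}"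
    by simp
  have two: "sum_reps 2 {m, M} (m + M) = 2"
    using sum_reps_two_eq_2_iff[OF pair(2)] by simp
  have "y = c [^] (m + M)" if y: "y \<in> E" for y
  proof -
    obtain t where t: "y = c [^] t" "sum_reps 2 {m, M} t = 2"
      using class_of_int_pow[OF tf D pair(1) pair_image c E y, of 2] two by auto
    then have "t = m + M"
      using sum_reps_two_eq_2_iff[OF pair(2)] by blast
    then show ?thesis
      using t(1) by simp
  qed
  then have "E = {c [^] (m + M)}"
    using E(2) by blast
  then show ?thesis
    using E(1) by simp
qed

lemma class_shape:
  assumes tf: "torsion_free G" and lc: "locally_cyclic G"
    and D: "schur_partition G D TYPE('f::field_char_0)" and C: "C \<in> D"
  shows "\<exists>g\<in>carrier G. C = {g} \<or> C = {g, inv g}"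
proof -
  have C_props: "C \<noteq> {}" "finite C" "C \<subseteq> carrier G"
    using schur_partition_class[OF D C] by auto
  obtain c where c: "c \<in> carrier G" "C \<subseteq> range (\<lambda>k::int. c [^] k)"
    using locally_cyclic_subset_int_pow_range[OF lc C_props(2,3)] by blast
  show ?thesis
  proof (cases "c = \<one>")
    case True
    then have "C = {\<one>}"
      using c(2) C_props(1) by auto
    then show ?thesis
      by blast
  next
    case False
    define K where "K = {k::int. c [^] k \<in> C}"
    have C_image: "C = (\<lambda>k. c [^] k) ` K"
      using c(2) by (auto simp: K_def)
    have K: "K \<subseteq> {Min K, Max K}" "Min K \<in> K" "Max K \<in> K"
      using class_exponents_min_max[OF tf D C C_image c(1) False] C_image C_props(1,2)
        finite_int_pow_image_imp_finite[OF tf c(1) False] by auto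
    show ?thesis
    proof (cases "Min K = Max K")
      case True
      then show ?thesis
        using K C_image c(1) by auto
    next
      case False
      have "K = {Min K, Max K}"
        using K by blast
      then have C_pair: "C = {c [^] Min K, c [^] Max K}"
        using C_image by (metis image_empty image_insert)
      then have pair: "{c [^] Min K, c [^] Max K} \<in> D"
        using C by simp
      then have single: "{c [^] (Min K + Max K)} \<in> D"
        using pair_class_sum_singleton[OF tf D c(1) \<open>c \<noteq> \<one>\<close> _ False] by blast
      have "Min K = - Max K"
        using pair_class_excludes_singleton[OF tf D c(1) \<open>c \<noteq> \<one>\<close> pair False single] by force
      then have "C = {c [^] Max K, inv (c [^] Max K)}"
        using C_pair c(1) by (simp add: int_pow_neg insert_commute)
      then show ?thesis
        using c(1) by blast
    qed
  qed
qed

lemma singleton_class_excludes_inverse_pair: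
  assumes tf: "torsion_free G" and lc: "locally_cyclic G"
    and D: "schur_partition G D TYPE('f::field_char_0)"
    and g: "{g} \<in> D" "g \<noteq> \<one>" and h: "{h, inv h} \<in> D" "h \<in> carrier G"
  shows "inv h = h"
proof (rule ccontr)
  assume "inv h \<noteq> h"
  have "g \<in> carrier G"
    using schur_partition_class[OF D g(1)] by simp
  then obtain c where c: "c \<in> carrier G" "{g, h} \<subseteq> range (\<lambda>k::int. c [^] k)"
    using locally_cyclic_subset_int_pow_range[OF lc, of "{g, h}"] h(2) by auto
  then obtain \<gamma> \<eta> :: int where powers: "g = c [^] \<gamma>" "h = c [^] \<eta>"
    by auto
  have "c \<noteq> \<one>" "\<gamma> \<noteq> 0"
    using powers(1) g(2) by auto
  moreover have "{c [^] \<eta>, c [^] (- \<eta>)} \<in> D" "\<eta> \<noteq> - \<eta>"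
    using h powers(2) c(1) \<open>inv h \<noteq> h\<close> by (auto simp: int_pow_neg)
  ultimately show False
    using pair_class_excludes_singleton[OF tf D c(1)] g(1) powers(1) by blast
qed

end

lemma schur_partition_eq_image:
  assumes D: "schur_partition G D TYPE('f::field)"
    and classes: "\<And>E. E \<in> D \<Longrightarrow> \<exists>g\<in>carrier G. E = P g"
    and canonical: "\<And>g h. g \<in> carrier G \<Longrightarrow> h \<in> carrier G \<Longrightarrow> g \<in> P h \<Longrightarrow> P g = P h"
  shows "D = {P g | g. g \<in> carrier G}"
proof (intro antisym subsetI)
  fix E
  assume "E \<in> D"
  then show "E \<in> {P g | g. g \<in> carrier G}"
    using classes by blast
next
  fix E
  assume "E \<in> {P g | g. g \<in> carrier G}"
  then obtain g where g: "g \<in> carrier G" "E = P g"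
    by blast
  then obtain E' where "E' \<in> D" "g \<in> E'"
    using schur_partition_cover[OF D] by blast
  moreover obtain h where "h \<in> carrier G" "E' = P h"
    using classes[OF \<open>E' \<in> D\<close>] by blast
  ultimately show "E \<in> D"
    using canonical g by metis
qed

theorem theorem4p1:
  fixes G :: "('g, 'b) monoid_scheme"
    and S :: "('g \<Rightarrow> 'f::field_char_0) set"
  assumes "group G"
    and "torsion_free G"
    and "locally_cyclic G"
    and "schur_ring G S"
  shows "S = group_ring G \<or> S = sym_schur_ring G"
proof -
  interpret group G by fact
  obtain D where D: "schur_partition G D TYPE('f)" and S: "S = span_classes D"
    using assms(4) unfolding schur_ring_def by blast
  note shape = class_shape[OF assms(2,3) D]
  show ?thesis
  proof (cases "\<exists>g. {g} \<in> D \<and> g \<noteq> \<one>\<^bsub>G\<^esub>")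
    case True
    then have "\<exists>g\<in>carrier G. E = {g}" if "E \<in> D" for E
      using shape[OF that] singleton_class_excludes_inverse_pair[OF assms(2,3) D] that by fastforce
    then have "D = {{g} | g. g \<in> carrier G}"
      by (intro schur_partition_eq_image[OF D]) auto
    then show ?thesis
      by (simp add: S group_ring_def)
  next
    case False
    then have "\<exists>g\<in>carrier G. E = {g, inv\<^bsub>G\<^esub> g}" if "E \<in> D" for E
      using shape[OF that] that by fastforce
    then have "D = {{g, inv\<^bsub>G\<^esub> g} | g. g \<in> carrier G}"
      by (intro schur_partition_eq_image[OF D]) auto
    then show ?thesis
      by (simp add: S sym_schur_ring_def)
  qed
qed

end
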